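(* Let $\mathcal{T}$ be a teacher class and let $H\subseteq\mathcal{X}\times\mathcal{Y}$ be a non-empty history consistent with $\mathcal{T}$. For every deterministic DFF algorithm $\mathcal{A}$, $M(\mathcal{A},\mathcal{T},H)\geq\mathrm{DFFdim}(\mathcal{T},H)$.
   Context: Setting. $\mathcal{X}$ is a set of examples, $\mathcal{Y}$ a finite set of labels, and $\Phi$ a set of Boolean features $\phi:\mathcal{X}\to\{0,1\}$; $\bot$ denotes a null symbol not in $\mathcal{X}\cup\mathcal{Y}\cup\Phi$. A teacher over $\mathcal{X},\mathcal{Y},\Phi$ is a pair $T=(\ell,\psi)$ with $\ell:\mathcal{X}\to\mathcal{Y}$ and $\psi:\mathcal{X}\times\mathcal{X}\to\Phi\cup\{\bot\}$ such that whenever $\ell(x)\neq\ell(\hat x)$, $\phi:=\psi(x,\hat x)\in\Phi$, $\phi(x)=1$ and $\phi(\hat x)=0$. A teacher class is a set of teachers. A history is a non-empty set $H\subseteq\mathcal{X}\times\mathcal{Y}$; a teacher $(\ell,\psi)$ is consistent with $H$ if $\ell(x)=y$ for all $(x,y)\in H$; $\mathcal{T}_H$ is the set of teachers in $\mathcal{T}$ consistent with $H$, and $\mathcal{T}$ is consistent with $H$ if $\mathcal{T}_H\neq\emptyset$. DFF protocol. A DFF algorithm is given $H$ in advance. In each round $t=1,2,\dots$: an example $x_t\in\mathcal{X}$ arrives; the algorithm outputs a predicted label $\hat y_t$ and an explanation $\hat x_t$, where $(\hat x_t,\hat y_t)$ must belong to $H\cup\{(x_s,y_s):s<t\}$; if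 $\hat y_t=y_t$ (the true label of $x_t$) the algorithm learns only that it was correct; otherwise (a mistake) it receives $y_t$ and a feature $\phi_t\in\Phi$. The feedback of round $t$ is consistent with a teacher $(\ell,\psi)$ if $y_t=\ell(x_t)$ and, when $\hat y_t\neq y_t$, $\phi_t=\psi(x_t,\hat x_t)$. $M(\mathcal{A},\mathcal{T},H)$ denotes the supremum, over all finite example sequences and all teachers $T\in\mathcal{T}_H$, of the number of mistakes of $\mathcal{A}$ when all feedback is consistent with $T$. DFF dimension. A DFF tree is a rooted tree whose nodes are triples $\langle y,\phi,x\rangle$ with $y\in\mathcal{Y}\cup\{\bot\}$, $\phi\in\Phi\cup\{\bot\}$, $x\in\mathcal{X}\cup\{\bot\}$, such that the root has $y=\phi=\bot$, a node has $x=\bot$ iff it is a leaf, every edge is labeled by a pair $(\hat x,\hat y)\in\mathcal{X}\times\mathcal{Y}$, and every non-root node $\langle y,\phi,x\rangle$ with incoming edge $(\hat x,\hat y)$ has $\phi\neq\bot$ whenever $y\neq\hat y$. For a parent–child pair $\langle\cdot,\cdot,x\rangle\xrightarrow{(\hat x,\hat y)}\langle y,\phi,\cdot\rangle$ on a path, $(x,y)$ is called a labeled example in that path. A path from the root is consistent with a teacher $(\ell,\psi)$ if for every such parent–child pair on it, $\ell(x)=y$ and, if $y\neq\hat y$, $\psi(x,\hat x)=\phi$. Given $\mathcal{T}$ consistent with $H$, a DFF tree is shattered by $\mathcal{T}$ and $H$ if: (1) every non-root node $\langle y,\phi,x\rangle$ with incoming edge $(\hat x,\hat y)$ has $y\neq\hat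 y$; (2) the labels of the outgoing edges of each non-leaf node $v$ are exactly the pairs that belong to $H$ or are labeled examples in the path from the root to $v$; (3) every root-to-leaf path is consistent with some teacher in $\mathcal{T}_H$; (4) all root-to-leaf paths have the same number of edges, called the height. $\mathrm{DFFdim}(\mathcal{T},H)$ is the maximal height of a DFF tree shattered by $\mathcal{T}$ and $H$. *)

theory Defs
  imports Main "HOL-Library.Extended_Nat"
begin

text \<open>Examples are elements of the type 'x (X = UNIV), labels of the finite type 'y,
  features are Boolean functions 'x \<Rightarrow> bool taken from a set Phi.
  The null symbol is modelled by None.\<close>

type_synonym ('x) feature = "'x \<Rightarrow> bool"
type_synonym ('x, 'y) teacher = "('x \<Rightarrow> 'y) \<times> ('x \<Rightarrow> 'x \<Rightarrow> 'x feature option)"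

definition is_teacher :: "'x feature set \<Rightarrow> ('x, 'y) teacher \<Rightarrow> bool" where
  "is_teacher Phi T \<longleftrightarrow>
     (\<forall>x xh. snd T x xh \<in> insert None (Some ` Phi)) \<and>
     (\<forall>x xh. fst T x \<noteq> fst T xh \<longrightarrow>
        (\<exists>phi. snd T x xh = Some phi \<and> phi \<in> Phi \<and> phi x \<and> \<not> phi xh))"

definition is_teacher_class :: "'x feature set \<Rightarrow> ('x, 'y) teacher set \<Rightarrow> bool" where
  "is_teacher_class Phi TT \<longleftrightarrow> (\<forall>T\<in>TT. is_teacher Phi T)"

definition consistent_teachers :: "('x, 'y) teacher set \<Rightarrow> ('x \<times> 'y) set \<Rightarrow> ('x, 'y) teacher set" where
  "consistent_teachers TT H = {T\<in>TT. \<forall>(x,y)\<in>H. fst T x = y}"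

text \<open>A transcript records, for each past round, the example, its true label (known to the
  learner in both cases: when correct it equals the prediction) and the feature received
  (None when the prediction was correct). A deterministic DFF algorithm (for the fixed
  history H given in advance) maps the transcript so far and the current example to a pair
  (explanation, predicted label).\<close>

type_synonym ('x, 'y) transcript = "('x \<times> 'y \<times> 'x feature option) list"
type_synonym ('x, 'y) dff_alg = "('x, 'y) transcript \<Rightarrow> 'x \<Rightarrow> 'x \<times> 'y"

definition valid_dff_alg :: "('x \<times> 'y) set \<Rightarrow> ('x, 'y) dff_alg \<Rightarrow> bool" where
  "valid_dff_alg H A \<longleftrightarrow>
     (\<forall>tr x. A tr x \<in> H \<union> {(x', y'). \<exists>f. (x', y', f) \<in> set tr})"

fun mistakes :: "('x, 'y) dff_alg \<Rightarrow> ('x, 'y) teacher \<Rightarrow> ('x, 'y) transcript \<Rightarrow> 'x list \<Rightarrow> nat" where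
  "mistakes A T tr [] = 0"
| "mistakes A T tr (x # xs) =
     (let (xh, yh) = A tr x; y = fst T x; m = (yh \<noteq> y) in
       (if m then 1 else 0) + mistakes A T (tr @ [(x, y, if m then snd T x xh else None)]) xs)"

definition mistake_bound :: "('x, 'y) dff_alg \<Rightarrow> ('x, 'y) teacher set \<Rightarrow> ('x \<times> 'y) set \<Rightarrow> enat" where
  "mistake_bound A TT H = (SUP T\<in>consistent_teachers TT H. SUP xs. enat (mistakes A T [] xs))"

text \<open>A node is a triple (y, phi, x) with optional entries (None = null symbol); the children
  are given by a partial map from edge labels (xh, yh) to subtrees.\<close>

datatype ('x, 'y, 'f) dfftree =
  DNode (nd_y: "'y option") (nd_phi: "'f option") (nd_x: "'x option")
        (nd_ch: "'x \<times> 'y \<Rightarrow> ('x, 'y, 'f) dfftree option")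

inductive dff_node :: "'f set \<Rightarrow> ('x, 'y, 'f) dfftree \<Rightarrow> bool" for Phi where
  "\<lbrakk> nd_phi t \<in> insert None (Some ` Phi);
     nd_x t = None \<longleftrightarrow> (\<forall>e. nd_ch t e = None);
     \<forall>e c. nd_ch t e = Some c \<longrightarrow>
        (nd_y c \<noteq> Some (snd e) \<longrightarrow> nd_phi c \<noteq> None) \<and> dff_node Phi c \<rbrakk>
   \<Longrightarrow> dff_node Phi t"

definition is_dff_tree :: "'f set \<Rightarrow> ('x, 'y, 'f) dfftree \<Rightarrow> bool" where
  "is_dff_tree Phi t \<longleftrightarrow> nd_y t = None \<and> nd_phi t = None \<and> dff_node Phi t"

text \<open>Root-to-leaf paths, as lists of parent-child steps (x of parent, edge label, y and phi of child).\<close>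
inductive rl_path :: "('x, 'y, 'f) dfftree \<Rightarrow> ('x \<times> ('x \<times> 'y) \<times> 'y option \<times> 'f option) list \<Rightarrow> bool" where
  leaf: "(\<forall>e. nd_ch t e = None) \<Longrightarrow> rl_path t []"
| step: "\<lbrakk> nd_ch t e = Some c; nd_x t = Some x; rl_path c p \<rbrakk>
         \<Longrightarrow> rl_path t ((x, e, nd_y c, nd_phi c) # p)"

definition path_consistent :: "('x, 'y) teacher \<Rightarrow> ('x \<times> ('x \<times> 'y) \<times> 'y option \<times> 'x feature option) list \<Rightarrow> bool" where
  "path_consistent T p \<longleftrightarrow>
     (\<forall>(x, (xh, yh), y, phi) \<in> set p. y = Some (fst T x) \<and> (y \<noteq> Some yh \<longrightarrow> snd T x xh = phi))"

text \<open>Shattering conditions (1) and (2): P is the set of pairs in H or labeled examples on the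
  path from the root to the current node.\<close>
inductive sh_node :: "('x \<times> 'y) set \<Rightarrow> ('x, 'y, 'f) dfftree \<Rightarrow> bool" where
  "\<lbrakk> \<forall>e c. nd_ch t e = Some c \<longrightarrow> nd_y c \<noteq> Some (snd e);
     nd_x t \<noteq> None \<longrightarrow> {e. nd_ch t e \<noteq> None} = P;
     \<forall>e c x. nd_ch t e = Some c \<longrightarrow> nd_x t = Some x \<longrightarrow>
        sh_node (P \<union> (\<lambda>y. (x, y)) ` set_option (nd_y c)) c \<rbrakk>
   \<Longrightarrow> sh_node P t"

definition shattered :: "'x feature set \<Rightarrow> ('x, 'y) teacher set \<Rightarrow> ('x \<times> 'y) set \<Rightarrow> nat
                          \<Rightarrow> ('x, 'y, 'x feature) dfftree \<Rightarrow> bool" where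
  "shattered Phi TT H d t \<longleftrightarrow>
     is_dff_tree Phi t \<and> sh_node H t \<and>
     (\<forall>p. rl_path t p \<longrightarrow> (\<exists>T\<in>consistent_teachers TT H. path_consistent T p) \<and> length p = d)"

definition DFFdim :: "'x feature set \<Rightarrow> ('x, 'y) teacher set \<Rightarrow> ('x \<times> 'y) set \<Rightarrow> enat" where
  "DFFdim Phi TT H = Sup (enat ` {d. \<exists>t. shattered Phi TT H d t})"

end

theory Submission
  imports Defs
begin

text \<open>
  An adversary walks down a shattered tree of height d while the algorithm runs. At a node
  with example x the algorithm answers with a pair (xh, yh) from H or from the examples
  already labelled; by condition (2) this pair labels an outgoing edge, and the adversary
  reveals the label y and feature of the child at the end of that edge. By condition (1)
  y differs from yh, so every edge costs a mistake. The resulting root-to-leaf path is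
  consistent with some teacher in the consistent class (condition (3)), and that teacher
  produces exactly this feedback, hence d mistakes.
\<close>

definition transcript_examples :: "('x, 'y) transcript \<Rightarrow> ('x \<times> 'y) set" where
  "transcript_examples tr = {(x, y). \<exists>f. (x, y, f) \<in> set tr}"

lemma transcript_examples_Nil [simp]: "transcript_examples [] = {}"
  unfolding transcript_examples_def by simp

lemma transcript_examples_snoc [simp]:
  "transcript_examples (tr @ [(x, y, f)]) = insert (x, y) (transcript_examples tr)"
  unfolding transcript_examples_def by auto

lemma valid_dff_alg_answer:
  "valid_dff_alg H A \<Longrightarrow> A tr x \<in> H \<union> transcript_examples tr"
  unfolding valid_dff_alg_def transcript_examples_def by simp

lemma mistakes_Cons_wrong:
  assumes "A tr x = (xh, yh)" and "fst T x \<noteq> yh"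
  shows "mistakes A T tr (x # xs) = Suc (mistakes A T (tr @ [(x, fst T x, snd T x xh)]) xs)"
  using assms by simp

lemma mistakes_le_mistake_bound:
  "T \<in> consistent_teachers TT H \<Longrightarrow> enat (mistakes A T [] xs) \<le> mistake_bound A TT H"
  unfolding mistake_bound_def by (meson SUP_upper SUP_upper2 UNIV_I)

lemma path_consistent_Cons:
  "path_consistent T ((x, (xh, yh), y, phi) # p) \<longleftrightarrow>
     y = Some (fst T x) \<and> (y \<noteq> Some yh \<longrightarrow> snd T x xh = phi) \<and> path_consistent T p"
  unfolding path_consistent_def by auto

lemma dff_node_child: "dff_node Phi t \<Longrightarrow> nd_ch t e = Some c \<Longrightarrow> dff_node Phi c"
  by (erule dff_node.cases) blast

lemma dff_node_has_path: "dff_node Phi t \<Longrightarrow> \<exists>p. rl_path t p"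
proof (induction rule: dff_node.induct)
  case (1 t)
  show ?case
  proof (cases "nd_x t")
    case None
    then show ?thesis using 1 rl_path.leaf by metis
  next
    case (Some x)
    then obtain e c where c: "nd_ch t e = Some c" using 1 by fastforce
    with 1 obtain p where "rl_path c p" by blast
    then show ?thesis using rl_path.step[OF c Some] by blast
  qed
qed

lemma sh_node_forces_mistakes:
  assumes "sh_node P t" and "dff_node Phi t" and "valid_dff_alg H A"
    and "P = H \<union> transcript_examples tr"
  shows "\<exists>p xs. rl_path t p \<and>
           (\<forall>T. path_consistent T p \<longrightarrow> length p \<le> mistakes A T tr xs)"
  using assms
proof (induction arbitrary: tr rule: sh_node.induct)
  case (1 t P)
  show ?case
  proof (cases "nd_x t")
    case None
    then have "\<forall>e. nd_ch t e = None" using \<open>dff_node Phi t\<close> by (auto elim: dff_node.cases)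
    then show ?thesis using rl_path.leaf by fastforce
  next
    case (Some x)
    obtain xh yh where answer: "A tr x = (xh, yh)" by fastforce
    then have "(xh, yh) \<in> P"
      using valid_dff_alg_answer[OF \<open>valid_dff_alg H A\<close>] \<open>P = _\<close> by metis
    then obtain c where c: "nd_ch t (xh, yh) = Some c" using 1(2) Some by auto
    have "dff_node Phi c" using dff_node_child[OF \<open>dff_node Phi t\<close> c] .
    have wrong: "nd_y c \<noteq> Some yh" using 1(1) c by fastforce
    show ?thesis
    proof (cases "nd_y c")
      case None
      obtain p where "rl_path c p" using dff_node_has_path[OF \<open>dff_node Phi c\<close>] by blast
      then have "rl_path t ((x, (xh, yh), nd_y c, nd_phi c) # p)"
        using rl_path.step[OF c Some] by blast
      moreover have "\<not> path_consistent T ((x, (xh, yh), nd_y c, nd_phi c) # p)" for T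
        using None by (simp add: path_consistent_Cons)
      ultimately show ?thesis by blast
    next
      case (Some y)
      define tr' where "tr' = tr @ [(x, y, nd_phi c)]"
      have "P \<union> (\<lambda>y. (x, y)) ` set_option (nd_y c) = H \<union> transcript_examples tr'"
        using Some \<open>P = _\<close> unfolding tr'_def by auto
      with 1(3) c \<open>nd_x t = Some x\<close> \<open>dff_node Phi c\<close> \<open>valid_dff_alg H A\<close>
      obtain p xs where p: "rl_path c p"
        and IH: "\<forall>T. path_consistent T p \<longrightarrow> length p \<le> mistakes A T tr' xs"
        by blast
      have "length ((x, (xh, yh), nd_y c, nd_phi c) # p) \<le> mistakes A T tr (x # xs)"
        if "path_consistent T ((x, (xh, yh), nd_y c, nd_phi c) # p)" for T
      proof -
        have "fst T x = y" "snd T x xh = nd_phi c" "path_consistent T p"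
          using that Some wrong by (auto simp: path_consistent_Cons)
        moreover have "fst T x \<noteq> yh" using wrong Some \<open>fst T x = y\<close> by auto
        moreover have "length p \<le> mistakes A T tr' xs" using IH \<open>path_consistent T p\<close> by blast
        ultimately show ?thesis
          using mistakes_Cons_wrong[of A tr x xh yh T] answer unfolding tr'_def by simp
      qed
      moreover have "rl_path t ((x, (xh, yh), nd_y c, nd_phi c) # p)"
        using rl_path.step[OF c \<open>nd_x t = Some x\<close> p] .
      ultimately show ?thesis by blast
    qed
  qed
qed

lemma shattered_le_mistake_bound:
  assumes "shattered Phi TT H d t" and "valid_dff_alg H A"
  shows "enat d \<le> mistake_bound A TT H"
proof -
  have "sh_node H t" "dff_node Phi t"
    using \<open>shattered Phi TT H d t\<close> unfolding shattered_def is_dff_tree_def by auto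
  then obtain p xs where p: "rl_path t p"
    and forced: "\<forall>T. path_consistent T p \<longrightarrow> length p \<le> mistakes A T [] xs"
    using sh_node_forces_mistakes[of H t Phi H A "[]"] \<open>valid_dff_alg H A\<close> by auto
  obtain T where T: "T \<in> consistent_teachers TT H" "path_consistent T p" and "length p = d"
    using \<open>shattered Phi TT H d t\<close> p unfolding shattered_def by blast
  have "length p \<le> mistakes A T [] xs"
    using forced T(2) by blast
  then have "enat d \<le> enat (mistakes A T [] xs)"
    using \<open>length p = d\<close> by simp
  also have "\<dots> \<le> mistake_bound A TT H"
    using mistakes_le_mistake_bound[OF T(1)] .
  finally show ?thesis .
qed

theorem mainTheorem2:
  fixes Phi :: "('x feature) set"
    and TT :: "('x, 'y::finite) teacher set"
    and H :: "('x \<times> 'y) set"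
    and A :: "('x, 'y) dff_alg"
  assumes "is_teacher_class Phi TT"
    and "H \<noteq> {}"
    and "consistent_teachers TT H \<noteq> {}"
    and "valid_dff_alg H A"
  shows "mistake_bound A TT H \<ge> DFFdim Phi TT H"
  unfolding DFFdim_def
  using shattered_le_mistake_bound[OF _ \<open>valid_dff_alg H A\<close>]
  by (auto intro: Sup_least)

end
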